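(* If $L\in\mathrm{Gr}(V,m)$ and $L\cap\operatorname{int}(K)\neq\emptyset$, then $$\sigma(L)=\min_{v\in K,\ |||v|||=1}\ \max_{x\in L,\ \|x\|=1}\lambda_v(x)=\min_{v\in K,\ y\in L^\perp,\ u\in K^*,\ |||v|||=1,\ \langle u,v\rangle=1}\|u-y\|^*.$$
   Context: $V$ is a finite-dimensional real vector space with inner product $\langle\cdot,\cdot\rangle$; $K\subseteq V$ a regular closed convex cone (closed, convex, pointed, nonempty interior) with dual cone $K^*:=\{u:\langle u,x\rangle\ge0\ \forall x\in K\}$; $L^\perp$ the orthogonal complement; $\mathrm{Gr}(V,m)$ the set of $m$-dimensional subspaces ($1\le m<\dim V$). $\|\cdot\|,|||\cdot|||$ are arbitrary norms on $V$, $\|u\|^*:=\max_{\|x\|=1}\langle u,x\rangle$. For $v\in K\setminus\{0\}$ and $x\in V$, $\lambda_v(x):=\sup\{t\in\mathbb R: x-tv\in K\}\in[-\infty,\infty)$, and $\sigma(L):=\min_{v\in K,|||v|||=1}\max_{x\in L,\|x\|\le1}\lambda_v(x)$. *)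

theory Defs
  imports "HOL-Analysis.Analysis"
begin

definition is_norm :: "('a::real_vector \<Rightarrow> real) \<Rightarrow> bool" where
  "is_norm N \<longleftrightarrow> (\<forall>x. 0 \<le> N x) \<and> (\<forall>x. N x = 0 \<longleftrightarrow> x = 0)
     \<and> (\<forall>c x. N (c *\<^sub>R x) = \<bar>c\<bar> * N x) \<and> (\<forall>x y. N (x + y) \<le> N x + N y)"

definition dual_norm :: "('a::real_inner \<Rightarrow> real) \<Rightarrow> 'a \<Rightarrow> real" where
  "dual_norm N u = Sup {inner u x | x. N x = 1}"

definition regular_cone :: "'a::euclidean_space set \<Rightarrow> bool" where
  "regular_cone K \<longleftrightarrow> K \<noteq> {} \<and> cone K \<and> closed K \<and> convex K
     \<and> K \<inter> uminus ` K = {0} \<and> interior K \<noteq> {}"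

definition dual_cone :: "'a::real_inner set \<Rightarrow> 'a set" where
  "dual_cone K = {u. \<forall>x\<in>K. 0 \<le> inner u x}"

text \<open>lambda_v(x) = sup {t. x - t v \<in> K}, valued in [-\<infinity>,\<infinity>) (Sup of empty set is -\<infinity>).\<close>
definition lam :: "'a::real_vector set \<Rightarrow> 'a \<Rightarrow> 'a \<Rightarrow> ereal" where
  "lam K v x = Sup (ereal ` {t. x - t *\<^sub>R v \<in> K})"

definition sigma :: "'a::real_vector set \<Rightarrow> ('a \<Rightarrow> real) \<Rightarrow> ('a \<Rightarrow> real) \<Rightarrow> 'a set \<Rightarrow> ereal" where
  "sigma K N M L = (INF v\<in>{v\<in>K. M v = 1}. SUP x\<in>{x\<in>L. N x \<le> 1}. lam K v x)"

end

theory Submission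
  imports Defs
begin

text \<open>
  Weak duality is immediate: if \<open>u \<in> K\<^sup>*\<close>, \<open>\<langle>u, v\<rangle> = 1\<close> and \<open>y \<in> L\<^sup>\<bottom>\<close>, then
  \<open>x - t v \<in> K\<close> forces \<open>t \<le> \<langle>u, x\<rangle> = \<langle>u - y, x\<rangle>\<close>, which is at most the dual norm of
  \<open>u - y\<close> for \<open>x\<close> in the unit ball \<open>B\<close> of \<open>L\<close>. Conversely, if \<open>\<lambda>\<^sub>v \<le> s\<close> on \<open>B\<close>, then
  separating \<open>c v\<close> (for \<open>c > s\<close>) from the closed convex set \<open>B - K\<close> yields \<open>u \<in> K\<^sup>*\<close>
  with \<open>\<langle>u, v\<rangle> = 1\<close> and \<open>\<langle>u, x\<rangle> \<le> c\<close> on \<open>B\<close>, and Hahn-Banach extends \<open>\<langle>u, \<cdot>\<rangle>\<close> from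
  \<open>L\<close> to a functional \<open>u - y\<close>, \<open>y \<in> L\<^sup>\<bottom>\<close>, of dual norm at most \<open>c\<close>. A point of
  \<open>L \<inter> int K\<close> bounds the dual feasible triples of bounded objective, so the dual minimum
  is attained, and its minimiser \<open>v\<close> also attains the primal minimum. Positive
  homogeneity of \<open>\<lambda>\<^sub>v\<close> lets the unit ball of \<open>L\<close> be replaced by its unit sphere.
\<close>

context
  fixes N :: "'a::euclidean_space \<Rightarrow> real"
  assumes N: "is_norm N"
begin

lemma is_norm_nonneg: "0 \<le> N x"
  and is_norm_eq_0_iff: "N x = 0 \<longleftrightarrow> x = 0"
  and is_norm_scaleR: "N (c *\<^sub>R x) = \<bar>c\<bar> * N x"
  and is_norm_triangle: "N (x + y) \<le> N x + N y"
  using N by (auto simp: is_norm_def)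

lemma is_norm_zero: "N 0 = 0"
  using is_norm_eq_0_iff by simp

lemma is_norm_pos: "x \<noteq> 0 \<Longrightarrow> 0 < N x"
  using is_norm_nonneg is_norm_eq_0_iff by (simp add: less_le)

lemma is_norm_minus: "N (- x) = N x"
  using is_norm_scaleR[of "-1" x] by simp

lemma is_norm_diff_ge: "N x - N y \<le> N (x - y)"
  using is_norm_triangle[of "x - y" y] by simp

lemma is_norm_normalize: "x \<noteq> 0 \<Longrightarrow> N ((1 / N x) *\<^sub>R x) = 1"
  using is_norm_pos[of x] by (simp add: is_norm_scaleR)

lemma exists_is_norm_eq_1: "\<exists>x. N x = 1"
  using is_norm_normalize nonempty_Basis by fastforce

lemma is_norm_sum_le: "finite A \<Longrightarrow> N (sum f A) \<le> (\<Sum>a\<in>A. N (f a))"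
proof (induction A rule: finite_induct)
  case empty then show ?case by (simp add: is_norm_zero)
next
  case (insert a A)
  then show ?case using is_norm_triangle[of "f a" "sum f A"] by simp
qed

lemma is_norm_le_norm: "\<exists>C>0. \<forall>x. N x \<le> C * norm x"
proof -
  define C where "C = (\<Sum>b\<in>Basis. N b) + 1"
  have C0: "C > 0" unfolding C_def using is_norm_nonneg by (simp add: add_nonneg_pos sum_nonneg)
  have "N x \<le> C * norm x" for x
  proof -
    have "N x = N (\<Sum>b\<in>Basis. (x \<bullet> b) *\<^sub>R b)" by (simp add: euclidean_representation)
    also have "\<dots> \<le> (\<Sum>b\<in>Basis. N ((x \<bullet> b) *\<^sub>R b))" by (rule is_norm_sum_le) simp
    also have "\<dots> = (\<Sum>b\<in>Basis. \<bar>x \<bullet> b\<bar> * N b)" by (simp add: is_norm_scaleR)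
    also have "\<dots> \<le> (\<Sum>b\<in>Basis. norm x * N b)"
      by (intro sum_mono mult_right_mono is_norm_nonneg) (simp add: Basis_le_norm)
    also have "\<dots> \<le> C * norm x" by (simp add: C_def sum_distrib_left algebra_simps)
    finally show ?thesis .
  qed
  with C0 show ?thesis by blast
qed

lemma continuous_on_is_norm: "continuous_on S N"
proof -
  obtain C where C: "C > 0" "\<And>x. N x \<le> C * norm x" using is_norm_le_norm by blast
  have "dist (N x) (N y) \<le> C * dist x y" for x y
    using is_norm_diff_ge[of x y] is_norm_diff_ge[of y x] C(2)[of "x - y"] C(2)[of "y - x"]
    by (simp add: dist_real_def dist_norm norm_minus_commute)
  then have "C-lipschitz_on S N" using C(1) by (intro lipschitz_onI) auto
  then show ?thesis by (rule lipschitz_on_continuous_on)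
qed

lemma is_norm_ge_norm: "\<exists>c>0. \<forall>x. c * norm x \<le> N x"
proof -
  obtain b :: 'a where "b \<in> Basis" using nonempty_Basis by blast
  then have "sphere (0::'a) 1 \<noteq> {}" by (auto intro!: exI[of _ b])
  then obtain x1 where x1: "x1 \<in> sphere 0 1" "\<And>y. y \<in> sphere 0 1 \<Longrightarrow> N x1 \<le> N y"
    using continuous_attains_inf[OF compact_sphere _ continuous_on_is_norm] by blast
  have "N x1 * norm x \<le> N x" for x
  proof (cases "x = 0")
    case False
    have "N x1 \<le> N ((1 / norm x) *\<^sub>R x)" using x1(2) False by simp
    then show ?thesis using False by (simp add: is_norm_scaleR field_simps)
  qed (simp add: is_norm_zero)
  moreover have "N x1 > 0" using x1(1) by (intro is_norm_pos) auto
  ultimately show ?thesis by blast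
qed

lemma compact_is_norm_ball: "compact {x. N x \<le> 1}"
proof -
  obtain c where c: "c > 0" "\<And>x. c * norm x \<le> N x" using is_norm_ge_norm by blast
  have "bounded {x. N x \<le> 1}"
    unfolding bounded_iff using c by (intro exI[of _ "1/c"]) (auto simp: field_simps intro: order_trans)
  moreover have "closed {x. N x \<le> 1}"
    by (rule closed_Collect_le[OF continuous_on_is_norm]) simp
  ultimately show ?thesis by (simp add: compact_eq_bounded_closed)
qed

lemma convex_is_norm_ball: "convex {x. N x \<le> 1}"
proof (rule convexI, simp)
  fix x y :: 'a and a b :: real
  assume "N x \<le> 1" "N y \<le> 1" "0 \<le> a" "0 \<le> b" "a + b = 1"
  then have "a * N x + b * N y \<le> 1" by (metis convex_bound_le)
  then show "N (a *\<^sub>R x + b *\<^sub>R y) \<le> 1"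
    using is_norm_triangle[of "a *\<^sub>R x" "b *\<^sub>R y"] \<open>0 \<le> a\<close> \<open>0 \<le> b\<close> by (simp add: is_norm_scaleR)
qed

lemma compact_subspace_is_norm_ball: "subspace L \<Longrightarrow> compact {x\<in>L. N x \<le> 1}"
  using closed_Int_compact[OF closed_subspace compact_is_norm_ball] by (simp add: Collect_conj_eq)

lemma convex_subspace_is_norm_ball: "subspace L \<Longrightarrow> convex {x\<in>L. N x \<le> 1}"
  using convex_Int[OF subspace_imp_convex convex_is_norm_ball] by (simp add: Collect_conj_eq)

lemma bdd_above_dual_norm: "bdd_above {inner u x |x. N x = 1}"
proof -
  obtain c where c: "c > 0" "\<And>x. c * norm x \<le> N x" using is_norm_ge_norm by blast
  have "inner u x \<le> norm u * (1 / c)" if "N x = 1" for x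
  proof -
    have "norm x \<le> 1 / c" using c(1) c(2)[of x] that by (simp add: field_simps)
    then show ?thesis using norm_cauchy_schwarz[of u x] by (meson mult_left_mono norm_ge_zero order_trans)
  qed
  then show ?thesis by (auto intro!: bdd_aboveI)
qed

lemma inner_le_dual_norm: "N x = 1 \<Longrightarrow> inner u x \<le> dual_norm N u"
  unfolding dual_norm_def by (intro cSup_upper bdd_above_dual_norm) auto

lemma dual_norm_le: "(\<And>x. N x = 1 \<Longrightarrow> inner u x \<le> c) \<Longrightarrow> dual_norm N u \<le> c"
  unfolding dual_norm_def using exists_is_norm_eq_1 by (intro cSup_least) auto

lemma inner_le_dual_norm_mult: "inner u x \<le> dual_norm N u * N x"
proof (cases "x = 0")
  case False
  then have "inner u ((1 / N x) *\<^sub>R x) \<le> dual_norm N u"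
    by (intro inner_le_dual_norm is_norm_normalize)
  then show ?thesis using is_norm_pos[OF False] by (simp add: field_simps)
qed (simp add: is_norm_zero)

lemma dual_norm_nonneg: "0 \<le> dual_norm N u"
proof -
  obtain x where x: "N x = 1" using exists_is_norm_eq_1 by blast
  then show ?thesis
    using inner_le_dual_norm[of x u] inner_le_dual_norm[of "- x" u] by (simp add: is_norm_minus)
qed

lemma continuous_on_dual_norm: "continuous_on S (dual_norm N)"
proof -
  obtain c where c: "c > 0" "\<And>x. c * norm x \<le> N x" using is_norm_ge_norm by blast
  have triangle: "dual_norm N u \<le> dual_norm N w + dist u w / c" for u w
  proof (rule dual_norm_le)
    fix x assume x: "N x = 1"
    then have "norm x \<le> 1 / c" using c(1) c(2)[of x] x by (simp add: field_simps)
    then have "inner (u - w) x \<le> dist u w / c"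
      using norm_cauchy_schwarz[of "u - w" x] mult_left_mono[of "norm x" "1 / c" "norm (u - w)"]
      by (simp add: dist_norm)
    then show "inner u x \<le> dual_norm N w + dist u w / c"
      using inner_le_dual_norm[OF x, of w] by (simp add: inner_diff_left)
  qed
  have "(1 / c)-lipschitz_on S (dual_norm N)"
  proof (rule lipschitz_onI)
    show "dist (dual_norm N u) (dual_norm N w) \<le> 1 / c * dist u w" for u w
      using triangle[of u w] triangle[of w u] by (simp add: dist_real_def dist_commute abs_le_iff)
  qed (use c(1) in simp)
  then show ?thesis by (rule lipschitz_on_continuous_on)
qed

lemma norm_le_dual_norm: "\<exists>C>0. \<forall>u. norm u \<le> C * dual_norm N u"
proof -
  obtain C where C: "C > 0" "\<And>x. N x \<le> C * norm x" using is_norm_le_norm by blast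
  have "norm u \<le> C * dual_norm N u" for u
  proof (cases "u = 0")
    case False
    have "norm u * norm u = inner u u" by (simp add: power2_norm_eq_inner[symmetric] power2_eq_square)
    also have "\<dots> \<le> dual_norm N u * N u" by (rule inner_le_dual_norm_mult)
    also have "\<dots> \<le> dual_norm N u * (C * norm u)" by (intro mult_left_mono C(2) dual_norm_nonneg)
    finally show ?thesis using False by (simp add: mult.commute mult.left_commute)
  qed (use C dual_norm_nonneg in simp)
  with C show ?thesis by blast
qed

end

context
  fixes K :: "'a::euclidean_space set"
  assumes K: "regular_cone K"
begin

lemma closed_regular_cone: "closed K"
  and convex_regular_cone: "convex K"
  using K by (auto simp: regular_cone_def)

lemma zero_mem_regular_cone: "0 \<in> K"
  using K by (auto simp: regular_cone_def cone_def)

lemma scaleR_mem_regular_cone: "x \<in> K \<Longrightarrow> 0 \<le> c \<Longrightarrow> c *\<^sub>R x \<in> K"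
  using K by (auto simp: regular_cone_def cone_def)

lemma regular_cone_pointed: "x \<in> K \<Longrightarrow> - x \<in> K \<Longrightarrow> x = 0"
  using K unfolding regular_cone_def by (metis IntI image_eqI minus_minus singletonD)

lemma neg_scaleR_mem_regular_cone_imp_nonpos:
  assumes "v \<in> K" "v \<noteq> 0" "- (t *\<^sub>R v) \<in> K"
  shows "t \<le> 0"
proof (rule ccontr)
  assume "\<not> t \<le> 0"
  then have "- v \<in> K" using scaleR_mem_regular_cone[OF assms(3), of "1 / t"] by simp
  then show False using regular_cone_pointed assms(1,2) by blast
qed

lemma interior_regular_cone_nonzero: "x \<in> interior K \<Longrightarrow> x \<noteq> 0"
proof
  assume "x \<in> interior K" "x = 0"
  then obtain r where r: "r > 0" "ball 0 r \<subseteq> K" using mem_interior by blast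
  obtain b :: 'a where b: "b \<in> Basis" using nonempty_Basis by blast
  then have "(r/2) *\<^sub>R b \<in> K" "- ((r/2) *\<^sub>R b) \<in> K"
    using r by (auto simp: subset_iff simp del: scaleR_minus_right)
  then show False using regular_cone_pointed r(1) b by fastforce
qed

lemma dual_cone_separation:
  assumes "v \<in> K" "compact A" "convex A" "0 \<in> A"
    and bound: "\<And>x t. x \<in> A \<Longrightarrow> x - t *\<^sub>R v \<in> K \<Longrightarrow> t \<le> s" and "s < c"
  shows "\<exists>u\<in>dual_cone K. inner u v = 1 \<and> (\<forall>x\<in>A. inner u x \<le> c)"
proof -
  define D where "D = (\<Union>x\<in>A. \<Union>k\<in>K. {x - k})"
  have "c *\<^sub>R v \<notin> D"
  proof
    assume "c *\<^sub>R v \<in> D"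
    then obtain x k where "x \<in> A" "k \<in> K" "c *\<^sub>R v = x - k" unfolding D_def by auto
    then have "x - c *\<^sub>R v \<in> K" by (metis add_diff_cancel_left' diff_add_cancel diff_diff_eq2)
    with bound[OF \<open>x \<in> A\<close>] \<open>s < c\<close> show False by fastforce
  qed
  then obtain a b where ab: "inner a (c *\<^sub>R v) < b" "\<And>z. z \<in> D \<Longrightarrow> b < inner a z"
    using separating_hyperplane_closed_point convex_differences[OF assms(3) convex_regular_cone]
      compact_closed_differences[OF assms(2) closed_regular_cone] unfolding D_def by metis
  have sep: "b < inner a x - inner a k" if "x \<in> A" "k \<in> K" for x k
    using ab(2)[of "x - k"] that unfolding D_def by (auto simp: inner_diff_right)
  have b0: "b < 0" using sep[OF assms(4) zero_mem_regular_cone] by simp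
  have aK: "inner a k \<le> 0" if "k \<in> K" for k
  proof (rule ccontr)
    assume pos: "\<not> inner a k \<le> 0"
    then have "inner a (((\<bar>b\<bar> + 1) / inner a k) *\<^sub>R k) = \<bar>b\<bar> + 1" by simp
    moreover have "((\<bar>b\<bar> + 1) / inner a k) *\<^sub>R k \<in> K"
      using pos that by (intro scaleR_mem_regular_cone) auto
    ultimately show False using sep[OF assms(4)] by fastforce
  qed
  have "0 \<le> s" using bound[OF assms(4), of 0] zero_mem_regular_cone by simp
  moreover have "c * inner a v < 0" using ab(1) b0 by simp
  ultimately have av: "inner a v < 0" using \<open>s < c\<close> by (simp add: mult_less_0_iff)
  define u where "u = (1 / inner a v) *\<^sub>R a"
  have "u \<in> dual_cone K" unfolding dual_cone_def u_def using aK av by (auto simp: divide_nonpos_neg)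
  moreover have "inner u v = 1" unfolding u_def using av by simp
  moreover have "inner u x \<le> c" if "x \<in> A" for x
  proof -
    have "c * inner a v < inner a x" using sep[OF that zero_mem_regular_cone] ab(1) by simp
    then show ?thesis using av unfolding u_def by (simp add: neg_divide_le_eq mult.commute)
  qed
  ultimately show ?thesis by blast
qed

lemma exists_dual_cone_inner_eq_1:
  assumes "v \<in> K" "v \<noteq> 0"
  shows "\<exists>u\<in>dual_cone K. inner u v = 1"
  using dual_cone_separation[OF assms(1), of "{0}" 0 1] neg_scaleR_mem_regular_cone_imp_nonpos[OF assms]
  by auto

end

lemma closed_dual_cone: "closed (dual_cone K)"
proof -
  have "dual_cone K = (\<Inter>x\<in>K. {u. inner x u \<ge> 0})" by (auto simp: dual_cone_def inner_commute)
  then show ?thesis by (auto intro!: closed_INT closed_halfspace_ge)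
qed

lemma dual_cone_norm_le_inner:
  assumes "ball x0 r \<subseteq> K" "0 < r" "u \<in> dual_cone K"
  shows "r * norm u \<le> inner u x0"
proof (cases "u = 0")
  case False
  have "x0 - (s / norm u) *\<^sub>R u \<in> K" if "0 < s" "s < r" for s
    using assms(1) that False by (auto simp: dist_norm subset_iff)
  then have le: "s * norm u \<le> inner u x0" if "0 < s" "s < r" for s
    using assms(3) that False unfolding dual_cone_def
    by (fastforce simp: inner_diff_right power2_norm_eq_inner[symmetric] power2_eq_square)
  have "r \<le> inner u x0 / norm u"
  proof (rule dense_le_bounded[of 0])
    fix s assume "0 < s" "s < r"
    then have "s * norm u \<le> inner u x0" by (rule le)
    then show "s \<le> inner u x0 / norm u" using False by (simp add: pos_le_divide_eq)
  qed (rule assms(2))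
  then show ?thesis using False by (simp add: pos_le_divide_eq)
qed simp

lemma lam_le: "(\<And>t. x - t *\<^sub>R v \<in> K \<Longrightarrow> ereal t \<le> c) \<Longrightarrow> lam K v x \<le> c"
  unfolding lam_def by (auto intro!: Sup_least)

lemma lam_ge: "x - t *\<^sub>R v \<in> K \<Longrightarrow> ereal t \<le> lam K v x"
  unfolding lam_def by (auto intro!: Sup_upper)

lemma inner_eq_0_if_bounded_below_on_subspace:
  assumes "subspace Z" "\<And>z. z \<in> Z \<Longrightarrow> b < inner a z" "z \<in> Z"
  shows "inner a z = 0"
proof (rule ccontr)
  assume ne: "inner a z \<noteq> 0"
  have "(- (\<bar>b\<bar> + 1) / inner a z) *\<^sub>R z \<in> Z" using assms(1,3) by (simp add: subspace_scale)
  from assms(2)[OF this] ne show False by simp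
qed

lemma inner_proportional_on_subspace:
  assumes "subspace L" "l0 \<in> L" "inner u l0 \<noteq> 0"
    and "\<And>z. z \<in> L \<Longrightarrow> inner u z = 0 \<Longrightarrow> inner a z = 0" "l \<in> L"
  shows "inner a l = inner a l0 / inner u l0 * inner u l"
proof -
  have "l - (inner u l / inner u l0) *\<^sub>R l0 \<in> L" using assms by (simp add: subspace_diff subspace_scale)
  moreover have "inner u (l - (inner u l / inner u l0) *\<^sub>R l0) = 0"
    using assms(3) by (simp add: inner_diff_right)
  ultimately have "inner a (l - (inner u l / inner u l0) *\<^sub>R l0) = 0" by (rule assms(4))
  then show ?thesis using assms(3) by (simp add: inner_diff_right field_simps)
qed

lemma separation_from_subspace_plus_norm_ball:
  fixes N :: "'a::euclidean_space \<Rightarrow> real"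
  assumes N: "is_norm N" and Z: "subspace Z" and l0: "\<And>z x. z \<in> Z \<Longrightarrow> N x \<le> 1 \<Longrightarrow> l0 \<noteq> z + x"
  shows "\<exists>a. inner a l0 < 0 \<and> (\<forall>z\<in>Z. inner a z = 0) \<and> (\<forall>x. N x \<le> 1 \<longrightarrow> inner a l0 < inner a x)"
proof -
  define T where "T = (\<Union>z\<in>Z. \<Union>x\<in>{x. N x \<le> 1}. {z + x})"
  have "l0 \<notin> T" using l0 unfolding T_def by blast
  then obtain a b where ab: "inner a l0 < b" "\<And>t. t \<in> T \<Longrightarrow> b < inner a t"
    using separating_hyperplane_closed_point convex_sums[OF subspace_imp_convex[OF Z] convex_is_norm_ball[OF N]]
      closed_compact_sums[OF closed_subspace[OF Z] compact_is_norm_ball[OF N]] unfolding T_def by metis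
  have sep: "b < inner a z + inner a x" if "z \<in> Z" "N x \<le> 1" for z x
    using ab(2)[of "z + x"] that unfolding T_def by (auto simp: inner_add_right)
  have "b < inner a z" if "z \<in> Z" for z using sep[OF that, of 0] is_norm_zero[OF N] by simp
  then have "\<forall>z\<in>Z. inner a z = 0" using inner_eq_0_if_bounded_below_on_subspace[OF Z] by blast
  moreover have "b < 0" using sep[OF subspace_0[OF Z], of 0] is_norm_zero[OF N] by simp
  moreover have "\<forall>x. N x \<le> 1 \<longrightarrow> b < inner a x" using sep[OF subspace_0[OF Z]] by simp
  ultimately show ?thesis using ab(1) by (intro exI[of _ a]) force
qed

text \<open>Hahn-Banach: the functional \<open>\<langle>u, \<cdot>\<rangle>\<close> restricted to \<open>L\<close> extends to a functional of
  dual norm \<open>\<le> c\<close>; the extension is read off from a separation of \<open>l0 \<in> L\<close>,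
  \<open>\<langle>u, l0\<rangle> = c\<close>, from \<open>(L \<inter> ker u) + B\<^sub>N\<close>.\<close>
lemma exists_orthogonal_comp_dual_norm_le:
  fixes N :: "'a::euclidean_space \<Rightarrow> real"
  assumes N: "is_norm N" and L: "subspace L"
    and bound: "\<And>x. x \<in> L \<Longrightarrow> N x \<le> 1 \<Longrightarrow> inner u x \<le> c1" and "c1 < c"
  shows "\<exists>y\<in>orthogonal_comp L. dual_norm N (u - y) \<le> c"
proof -
  have c0: "0 < c" using bound[of 0] \<open>c1 < c\<close> is_norm_zero[OF N] subspace_0[OF L] by simp
  show ?thesis
  proof (cases "\<forall>l\<in>L. inner u l = 0")
    case True
    then have "u \<in> orthogonal_comp L" by (auto simp: orthogonal_comp_def orthogonal_def inner_commute)
    moreover have "dual_norm N (u - u) \<le> c" using c0 by (auto intro!: dual_norm_le[OF N])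
    ultimately show ?thesis by blast
  next
    case False
    then obtain l1 where l1: "l1 \<in> L" "inner u l1 \<noteq> 0" by blast
    define l0 where "l0 = (c / inner u l1) *\<^sub>R l1"
    have l0: "l0 \<in> L" "inner u l0 = c" using l1 L by (auto simp: l0_def subspace_scale)
    define Z where "Z = {z\<in>L. inner u z = 0}"
    have Z: "subspace Z" unfolding Z_def using L by (auto simp: subspace_def inner_add_right)
    have "l0 \<noteq> z + x" if "z \<in> Z" "N x \<le> 1" for z x
    proof
      assume "l0 = z + x"
      then have "x = l0 - z" by simp
      then have "x \<in> L" "inner u x = c" using that(1) l0 L by (auto simp: Z_def subspace_diff inner_diff_right)
      with bound \<open>N x \<le> 1\<close> \<open>c1 < c\<close> show False by fastforce
    qed
    then obtain a where a: "inner a l0 < 0" "\<And>z. z \<in> Z \<Longrightarrow> inner a z = 0"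
      "\<And>x. N x \<le> 1 \<Longrightarrow> inner a l0 < inner a x"
      using separation_from_subspace_plus_norm_ball[OF N Z] by blast
    define \<alpha> where "\<alpha> = inner a l0 / c"
    have \<alpha>: "\<alpha> < 0" using a(1) c0 by (simp add: \<alpha>_def divide_neg_pos)
    have "inner (u - (1 / \<alpha>) *\<^sub>R a) l = 0" if "l \<in> L" for l
    proof -
      have "inner a l = inner a l0 / inner u l0 * inner u l"
        using a(2) by (intro inner_proportional_on_subspace[OF L l0(1) _ _ that]) (use c0 in \<open>auto simp: l0(2) Z_def\<close>)
      then have "inner a l = \<alpha> * inner u l" by (simp only: l0(2) \<alpha>_def)
      then show ?thesis using \<alpha> by (simp add: inner_diff_left)
    qed
    then have "u - (1 / \<alpha>) *\<^sub>R a \<in> orthogonal_comp L"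
      by (auto simp: orthogonal_comp_def orthogonal_def inner_commute)
    moreover have "dual_norm N ((1 / \<alpha>) *\<^sub>R a) \<le> c"
    proof (rule dual_norm_le[OF N])
      fix x assume "N x = 1"
      then have "inner a x / \<alpha> \<le> inner a l0 / \<alpha>" using a(3)[of x] \<alpha> by (simp add: divide_right_mono_neg)
      also have "inner a l0 / \<alpha> = c" using \<alpha> c0 by (auto simp: \<alpha>_def)
      finally show "inner ((1 / \<alpha>) *\<^sub>R a) x \<le> c" by simp
    qed
    ultimately show ?thesis by (intro bexI[where x = "u - (1 / \<alpha>) *\<^sub>R a"]) simp_all
  qed
qed

lemma SUP_lam_norm_ball_eq_sphere:
  fixes K L :: "'a::euclidean_space set"
  assumes K: "regular_cone K" and N: "is_norm N" and L: "subspace L"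
    and v: "v \<in> K" "v \<noteq> 0" and x1: "x1 \<in> L" "x1 \<in> K" "x1 \<noteq> 0"
  shows "(SUP x\<in>{x\<in>L. N x \<le> 1}. lam K v x) = (SUP x\<in>{x\<in>L. N x = 1}. lam K v x)"
    (is "?ball = ?sphere")
proof (rule antisym)
  show "?sphere \<le> ?ball" by (rule SUP_subset_mono) auto
  have "ereal 0 \<le> lam K v ((1 / N x1) *\<^sub>R x1)"
    by (rule lam_ge) (simp add: x1(2) scaleR_mem_regular_cone[OF K] is_norm_nonneg[OF N])
  also have "\<dots> \<le> ?sphere"
    by (rule SUP_upper) (simp add: x1(1,3) L subspace_scale is_norm_normalize[OF N])
  finally have sphere_nonneg: "ereal 0 \<le> ?sphere" .
  have pos: "ereal t \<le> ?sphere" if x: "x \<in> L" "N x \<le> 1" and t: "x - t *\<^sub>R v \<in> K" "0 < t" for x t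
  proof -
    have "x \<noteq> 0" using neg_scaleR_mem_regular_cone_imp_nonpos[OF K v, of t] t by auto
    then have Nx: "0 < N x" by (rule is_norm_pos[OF N])
    have "(1 / N x) *\<^sub>R x - (t / N x) *\<^sub>R v \<in> K"
      using scaleR_mem_regular_cone[OF K t(1), of "1 / N x"] Nx by (simp add: scaleR_diff_right)
    then have "ereal (t / N x) \<le> lam K v ((1 / N x) *\<^sub>R x)" by (rule lam_ge)
    also have "\<dots> \<le> ?sphere"
      by (rule SUP_upper) (simp add: x(1) L subspace_scale is_norm_normalize[OF N \<open>x \<noteq> 0\<close>])
    finally have "ereal (t / N x) \<le> ?sphere" .
    moreover have "t \<le> t / N x" using x(2) t(2) Nx by (simp add: le_divide_eq)
    ultimately show ?thesis by (meson ereal_less_eq(3) order_trans)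
  qed
  show "?ball \<le> ?sphere"
  proof (rule SUP_least, rule lam_le)
    fix x t assume "x \<in> {x\<in>L. N x \<le> 1}" "x - t *\<^sub>R v \<in> K"
    show "ereal t \<le> ?sphere"
    proof (cases "0 < t")
      case True
      then show ?thesis using pos \<open>x - t *\<^sub>R v \<in> K\<close> \<open>x \<in> {x\<in>L. N x \<le> 1}\<close> by blast
    next
      case False
      then have "ereal t \<le> ereal 0" by simp
      then show ?thesis using sphere_nonneg by (rule order_trans)
    qed
  qed
qed

lemma SUP_lam_le_dual_norm:
  fixes K L :: "'a::euclidean_space set"
  assumes N: "is_norm N" and "y \<in> orthogonal_comp L" "u \<in> dual_cone K" "inner u v = 1"
  shows "(SUP x\<in>{x\<in>L. N x \<le> 1}. lam K v x) \<le> ereal (dual_norm N (u - y))"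
proof (rule SUP_least, rule lam_le)
  fix x t assume x: "x \<in> {x\<in>L. N x \<le> 1}" and "x - t *\<^sub>R v \<in> K"
  have yx: "inner y x = 0" using assms(2) x by (auto simp: orthogonal_comp_def orthogonal_def inner_commute)
  have "t \<le> inner u x" using \<open>x - t *\<^sub>R v \<in> K\<close> assms(3,4) by (auto simp: dual_cone_def inner_diff_right)
  also have "inner u x = inner (u - y) x" using yx by (simp add: inner_diff_left)
  also have "\<dots> \<le> dual_norm N (u - y) * N x" by (rule inner_le_dual_norm_mult[OF N])
  also have "\<dots> \<le> dual_norm N (u - y)" using x dual_norm_nonneg[OF N] by (simp add: mult_left_le)
  finally show "ereal t \<le> ereal (dual_norm N (u - y))" by simp
qed

definition dual_triples :: "'a::real_inner set \<Rightarrow> 'a set \<Rightarrow> ('a \<Rightarrow> real) \<Rightarrow> ('a \<times> 'a \<times> 'a) set" where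
  "dual_triples K L M =
     {(v, y, u). v \<in> K \<and> y \<in> orthogonal_comp L \<and> u \<in> dual_cone K \<and> M v = 1 \<and> inner u v = 1}"

definition dual_objective :: "('a::real_inner \<Rightarrow> real) \<Rightarrow> 'a \<times> 'a \<times> 'a \<Rightarrow> real" where
  "dual_objective N = (\<lambda>(v, y, u). dual_norm N (u - y))"

lemma INF_dual_objective_le_SUP_lam:
  fixes K L :: "'a::euclidean_space set"
  assumes K: "regular_cone K" and N: "is_norm N" and L: "subspace L" and v: "v \<in> K" "M v = 1"
  shows "(INF p\<in>dual_triples K L M. ereal (dual_objective N p)) \<le> (SUP x\<in>{x\<in>L. N x \<le> 1}. lam K v x)"
    (is "?dual \<le> ?primal")
proof (rule ereal_le_epsilon2)
  fix e :: real assume "0 < e"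
  have "ereal 0 \<le> lam K v 0" by (rule lam_ge) (simp add: zero_mem_regular_cone[OF K])
  also have "\<dots> \<le> ?primal" by (rule SUP_upper) (simp add: is_norm_zero[OF N] subspace_0[OF L])
  finally have "0 \<le> ?primal" by (simp add: zero_ereal_def)
  then show "?dual \<le> ?primal + ereal e"
  proof (cases ?primal)
    case (real s)
    have bound: "t \<le> s" if "x \<in> {x\<in>L. N x \<le> 1}" "x - t *\<^sub>R v \<in> K" for x t
      using order_trans[OF lam_ge[OF that(2)] SUP_upper[OF that(1), of "lam K v"]] real by simp
    have "\<exists>u\<in>dual_cone K. inner u v = 1 \<and> (\<forall>x\<in>{x\<in>L. N x \<le> 1}. inner u x \<le> s + e / 2)"
      by (rule dual_cone_separation[OF K v(1) compact_subspace_is_norm_ball[OF N L]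
          convex_subspace_is_norm_ball[OF N L] _ bound])
        (simp_all add: is_norm_zero[OF N] subspace_0[OF L] \<open>0 < e\<close>)
    then obtain u where u: "u \<in> dual_cone K" "inner u v = 1"
      and u_bound: "\<And>x. x \<in> L \<Longrightarrow> N x \<le> 1 \<Longrightarrow> inner u x \<le> s + e / 2"
      by auto
    have "s + e / 2 < s + e" using \<open>0 < e\<close> by simp
    then obtain y where y: "y \<in> orthogonal_comp L" "dual_norm N (u - y) \<le> s + e"
      using exists_orthogonal_comp_dual_norm_le[OF N L u_bound] by blast
    have "(v, y, u) \<in> dual_triples K L M" using u y v by (simp add: dual_triples_def)
    then have "?dual \<le> ereal (dual_objective N (v, y, u))" by (rule INF_lower)
    also have "\<dots> \<le> ?primal + ereal e" using y real by (simp add: dual_objective_def)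
    finally show ?thesis .
  qed simp_all
qed

lemma closed_dual_triples:
  fixes K L :: "'a::euclidean_space set"
  assumes "closed K" "is_norm M"
  shows "closed (dual_triples K L M)"
proof -
  have "dual_triples K L M = (K \<times> orthogonal_comp L \<times> dual_cone K)
      \<inter> {p. M (fst p) = 1} \<inter> {p. inner (snd (snd p)) (fst p) = 1}"
    by (auto simp: dual_triples_def)
  moreover have "closed (K \<times> orthogonal_comp L \<times> dual_cone K)"
    by (intro closed_Times assms(1) closed_dual_cone closed_subspace subspace_orthogonal_comp)
  moreover have "closed {p::'a \<times> 'a \<times> 'a. M (fst p) = 1}"
    by (intro closed_Collect_eq continuous_on_const continuous_on_compose2[OF continuous_on_is_norm[OF assms(2)]]
        continuous_intros) auto
  moreover have "closed {p::'a \<times> 'a \<times> 'a. inner (snd (snd p)) (fst p) = 1}"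
    by (intro closed_Collect_eq continuous_intros)
  ultimately show ?thesis by (simp add: closed_Int)
qed

lemma continuous_on_dual_objective:
  fixes N :: "'a::euclidean_space \<Rightarrow> real"
  assumes "is_norm N"
  shows "continuous_on S (dual_objective N)"
proof -
  have "continuous_on S (\<lambda>p. dual_norm N (snd (snd p) - fst (snd p)))"
    by (intro continuous_on_compose2[OF continuous_on_dual_norm[OF assms]] continuous_intros) auto
  then show ?thesis unfolding dual_objective_def case_prod_beta .
qed

text \<open>Boundedness of \<open>u\<close> comes from \<open>r \<parallel>u\<parallel> \<le> \<langle>u, x0\<rangle> = \<langle>u - y, x0\<rangle>\<close>, where
  \<open>ball x0 r \<subseteq> K\<close> and \<open>x0 \<in> L\<close>.\<close>
lemma bounded_dual_triples_sublevel:
  fixes K L :: "'a::euclidean_space set"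
  assumes N: "is_norm N" and M: "is_norm M" and "x0 \<in> L" "x0 \<in> interior K"
  shows "bounded {p\<in>dual_triples K L M. dual_objective N p \<le> R}"
proof -
  obtain r where r: "r > 0" "ball x0 r \<subseteq> K" using assms(4) mem_interior by blast
  obtain cM where cM: "cM > 0" "\<And>x. cM * norm x \<le> M x" using is_norm_ge_norm[OF M] by blast
  obtain CN where CN: "CN > 0" "\<And>u. norm u \<le> CN * dual_norm N u" using norm_le_dual_norm[OF N] by blast
  have "norm (v, y, u) \<le> 1 / cM + 2 * (R * N x0 / r) + CN * R"
    if "(v, y, u) \<in> dual_triples K L M" "dual_norm N (u - y) \<le> R" for v y u
  proof -
    have vyu: "M v = 1" "y \<in> orthogonal_comp L" "u \<in> dual_cone K"
      using that(1) by (auto simp: dual_triples_def)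
    have "norm v \<le> 1 / cM" using cM(1) cM(2)[of v] vyu(1) by (simp add: pos_le_divide_eq mult.commute)
    have "norm (u - y) \<le> CN * R" using CN(2)[of "u - y"] that(2) CN(1) by (smt (verit) mult_left_mono)
    have "inner y x0 = 0"
      using vyu(2) assms(3) by (auto simp: orthogonal_comp_def orthogonal_def inner_commute)
    then have "r * norm u \<le> inner (u - y) x0"
      using dual_cone_norm_le_inner[OF r(2,1) vyu(3)] by (simp add: inner_diff_left)
    also have "\<dots> \<le> R * N x0"
      using inner_le_dual_norm_mult[OF N] that(2) is_norm_nonneg[OF N]
      by (meson mult_right_mono order_trans)
    finally have "norm u \<le> R * N x0 / r" using r(1) by (simp add: pos_le_divide_eq mult.commute)
    moreover have "norm (v, y, u) \<le> norm v + (norm y + norm u)"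
      using norm_Pair_le[of v "(y, u)"] norm_Pair_le[of y u] by simp
    moreover have "norm y \<le> norm u + norm (u - y)" using norm_triangle_ineq4[of u "u - y"] by simp
    ultimately show ?thesis using \<open>norm v \<le> 1 / cM\<close> \<open>norm (u - y) \<le> CN * R\<close> by linarith
  qed
  then show ?thesis unfolding bounded_iff by (force simp: dual_objective_def)
qed

lemma dual_objective_attains_min:
  fixes K L :: "'a::euclidean_space set"
  assumes K: "regular_cone K" and N: "is_norm N" and M: "is_norm M"
    and "x0 \<in> L" "x0 \<in> interior K"
  shows "\<exists>p\<in>dual_triples K L M. \<forall>q\<in>dual_triples K L M. dual_objective N p \<le> dual_objective N q"
proof -
  have "x0 \<in> K" "x0 \<noteq> 0"
    using assms(5) interior_subset interior_regular_cone_nonzero[OF K] by blast+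
  define v0 where "v0 = (1 / M x0) *\<^sub>R x0"
  have "0 < M x0" by (rule is_norm_pos[OF M \<open>x0 \<noteq> 0\<close>])
  then have v0: "v0 \<in> K" "M v0 = 1" "v0 \<noteq> 0"
    using \<open>x0 \<in> K\<close> \<open>x0 \<noteq> 0\<close> unfolding v0_def
    by (simp_all add: scaleR_mem_regular_cone[OF K] is_norm_normalize[OF M])
  obtain u0 where "u0 \<in> dual_cone K" "inner u0 v0 = 1" using exists_dual_cone_inner_eq_1[OF K v0(1,3)] by blast
  then have p0: "(v0, 0, u0) \<in> dual_triples K L M"
    using v0 by (simp add: dual_triples_def orthogonal_comp_def orthogonal_def)
  define R where "R = dual_objective N (v0, 0, u0)"
  define S where "S = {p\<in>dual_triples K L M. dual_objective N p \<le> R}"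
  have "S = dual_triples K L M \<inter> {p. dual_objective N p \<le> R}" by (auto simp: S_def)
  then have "closed S"
    using closed_dual_triples[OF closed_regular_cone[OF K] M]
      closed_Collect_le[OF continuous_on_dual_objective[OF N] continuous_on_const] by (simp add: closed_Int)
  then have "compact S"
    using bounded_dual_triples_sublevel[OF N M assms(4,5)] by (simp add: S_def compact_eq_bounded_closed)
  moreover have "S \<noteq> {}" using p0 by (auto simp: S_def R_def)
  ultimately obtain p where p: "p \<in> S" "\<And>q. q \<in> S \<Longrightarrow> dual_objective N p \<le> dual_objective N q"
    using continuous_attains_inf[OF _ _ continuous_on_dual_objective[OF N]] by meson
  have "dual_objective N p \<le> dual_objective N q" if "q \<in> dual_triples K L M" for q
  proof (cases "dual_objective N q \<le> R")
    case True
    then show ?thesis using p(2) that by (simp add: S_def)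
  next
    case False
    then show ?thesis using p(1) by (simp add: S_def)
  qed
  moreover have "p \<in> dual_triples K L M" using p(1) by (simp add: S_def)
  ultimately show ?thesis by blast
qed

lemma sigma_eq_dual_minimum:
  fixes K L :: "'a::euclidean_space set"
  assumes K: "regular_cone K" and N: "is_norm N" and M: "is_norm M" and L: "subspace L"
    and "L \<inter> interior K \<noteq> {}"
  shows "\<exists>v y u. (v, y, u) \<in> dual_triples K L M
    \<and> sigma K N M L = (SUP x\<in>{x\<in>L. N x \<le> 1}. lam K v x)
    \<and> sigma K N M L = ereal (dual_norm N (u - y))
    \<and> sigma K N M L = (INF q\<in>dual_triples K L M. ereal (dual_objective N q))"
proof -
  let ?ball = "\<lambda>v. SUP x\<in>{x\<in>L. N x \<le> 1}. lam K v x"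
  obtain x0 where "x0 \<in> L" "x0 \<in> interior K" using assms(5) by blast
  then obtain p where p: "p \<in> dual_triples K L M"
    and min: "\<And>q. q \<in> dual_triples K L M \<Longrightarrow> dual_objective N p \<le> dual_objective N q"
    using dual_objective_attains_min[OF K N M] by blast
  obtain v y u where p_eq: "p = (v, y, u)" by (cases p)
  then have vyu: "(v, y, u) \<in> dual_triples K L M" and obj: "dual_objective N p = dual_norm N (u - y)"
    using p by (simp_all add: dual_objective_def)
  have v: "v \<in> K" "M v = 1" using vyu by (auto simp: dual_triples_def)
  have dual: "(INF q\<in>dual_triples K L M. ereal (dual_objective N q)) = ereal (dual_norm N (u - y))"
    unfolding obj[symmetric] using p min by (intro antisym INF_greatest INF_lower) auto
  have primal_ge: "ereal (dual_norm N (u - y)) \<le> ?ball w" if "w \<in> K" "M w = 1" for w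
    using INF_dual_objective_le_SUP_lam[where M = M, OF K N L that] dual by simp
  have "?ball v \<le> ereal (dual_norm N (u - y))"
    using vyu by (intro SUP_lam_le_dual_norm[OF N]) (auto simp: dual_triples_def)
  then have ball_v: "?ball v = ereal (dual_norm N (u - y))" using primal_ge[OF v] by (rule antisym)
  have "sigma K N M L = ?ball v"
    unfolding sigma_def
  proof (rule antisym)
    show "(INF w\<in>{w\<in>K. M w = 1}. ?ball w) \<le> ?ball v" using v by (intro INF_lower) simp
    show "?ball v \<le> (INF w\<in>{w\<in>K. M w = 1}. ?ball w)" using primal_ge ball_v by (auto intro!: INF_greatest)
  qed
  with vyu ball_v dual show ?thesis by (intro exI[of _ v] exI[of _ y] exI[of _ u]) simp
qed

theorem mainTheorem8:
  fixes K L :: "'a::euclidean_space set" and N M :: "'a \<Rightarrow> real" and m :: nat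
  assumes "regular_cone K"
    and "is_norm N" and "is_norm M"
    and "subspace L" and "dim L = m" and "1 \<le> m" and "m < DIM('a)"
    and "L \<inter> interior K \<noteq> {}"
  shows "sigma K N M L = (INF v\<in>{v\<in>K. M v = 1}. SUP x\<in>{x\<in>L. N x = 1}. lam K v x)
    \<and> sigma K N M L =
        (INF (v, y, u)\<in>{(v, y, u). v \<in> K \<and> y \<in> orthogonal_comp L \<and> u \<in> dual_cone K
                       \<and> M v = 1 \<and> inner u v = 1}. ereal (dual_norm N (u - y)))
    \<and> (\<exists>v\<in>K. M v = 1 \<and> sigma K N M L = (SUP x\<in>{x\<in>L. N x \<le> 1}. lam K v x))
    \<and> (\<exists>v\<in>K. M v = 1 \<and> sigma K N M L = (SUP x\<in>{x\<in>L. N x = 1}. lam K v x))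
    \<and> (\<exists>v\<in>K. \<exists>y\<in>orthogonal_comp L. \<exists>u\<in>dual_cone K. M v = 1 \<and> inner u v = 1
          \<and> sigma K N M L = ereal (dual_norm N (u - y)))"
proof -
  obtain x0 where x0: "x0 \<in> L" "x0 \<in> interior K" using assms(8) by blast
  then have "x0 \<in> K" "x0 \<noteq> 0" using interior_subset interior_regular_cone_nonzero[OF assms(1)] by blast+
  then have sphere: "(SUP x\<in>{x\<in>L. N x \<le> 1}. lam K w x) = (SUP x\<in>{x\<in>L. N x = 1}. lam K w x)"
    if "w \<in> K" "M w = 1" for w
    using that is_norm_zero[OF assms(3)] by (intro SUP_lam_norm_ball_eq_sphere[OF assms(1,2,4) _ _ x0(1)]) auto
  obtain v y u where vyu: "(v, y, u) \<in> dual_triples K L M"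
    and ball_v: "sigma K N M L = (SUP x\<in>{x\<in>L. N x \<le> 1}. lam K v x)"
    and dual_v: "sigma K N M L = ereal (dual_norm N (u - y))"
    and dual_INF: "sigma K N M L = (INF q\<in>dual_triples K L M. ereal (dual_objective N q))"
    using sigma_eq_dual_minimum[OF assms(1-4,8)] by blast
  have v: "v \<in> K" "M v = 1" "y \<in> orthogonal_comp L" "u \<in> dual_cone K" "inner u v = 1"
    using vyu by (simp_all add: dual_triples_def)
  show ?thesis
  proof (intro conjI)
    show "sigma K N M L = (INF w\<in>{w\<in>K. M w = 1}. SUP x\<in>{x\<in>L. N x = 1}. lam K w x)"
      unfolding sigma_def by (rule INF_cong) (simp_all add: sphere)
    show "sigma K N M L = (INF (v, y, u)\<in>{(v, y, u). v \<in> K \<and> y \<in> orthogonal_comp L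
        \<and> u \<in> dual_cone K \<and> M v = 1 \<and> inner u v = 1}. ereal (dual_norm N (u - y)))"
      using dual_INF unfolding dual_triples_def dual_objective_def case_prod_beta .
    show "\<exists>v\<in>K. M v = 1 \<and> sigma K N M L = (SUP x\<in>{x\<in>L. N x \<le> 1}. lam K v x)"
      using v ball_v by blast
    show "\<exists>v\<in>K. M v = 1 \<and> sigma K N M L = (SUP x\<in>{x\<in>L. N x = 1}. lam K v x)"
      using v ball_v sphere[OF v(1,2)] by (intro bexI[of _ v]) simp_all
    show "\<exists>v\<in>K. \<exists>y\<in>orthogonal_comp L. \<exists>u\<in>dual_cone K. M v = 1 \<and> inner u v = 1
        \<and> sigma K N M L = ereal (dual_norm N (u - y))"
      using v dual_v by blast
  qed
qed

end
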